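(* There is an absolute constant $C$ such that for every $T\ge 3$, the algorithm BM-log run with $K=(T/\log T)^{1/3}$ (taken to be an integer $\ge2$) guarantees, against every oblivious adversary sequence $y_1,\dots,y_T\in\{0,1\}$, $$\mathsf{PKLCal}\le C\,T^{1/3}(\log T)^{2/3}.$$
   Context: Forecasting protocol: for $t=1,\dots,T$, the forecaster outputs a distribution $\mathcal{P}_t$ over a finite set $\mathcal{Z}\subset[0,1]$ and draws its prediction from it; simultaneously the adversary (which fixes $y_1,\dots,y_T$ in advance) chooses $y_t\in\{0,1\}$, then revealed. Log loss $\ell(w,y)=-y\log w-(1-y)\log(1-w)$. Bernoulli KL $\mathsf{KL}(q,p)=q\log\frac qp+(1-q)\log\frac{1-q}{1-p}$; $\tilde\rho_p=\frac{\sum_t y_t\mathcal{P}_t(p)}{\sum_t\mathcal{P}_t(p)}$ ($0/0=0$); $\mathsf{PKLCal}:=\sum_{p\in\mathcal{Z}}\sum_t\mathcal{P}_t(p)\mathsf{KL}(\tilde\rho_p,p)$. Algorithm BM-log with integer parameter $K\ge2$: $\mathcal{Z}=\{z_0,\dots,z_K\}$ with $z_0=\sin^2\frac{\pi}{4K}$, $z_i=\sin^2\frac{\pi i}{2K}$ ($1\le i\le K-1$), $z_K=\cos^2\frac{\pi}{4K}$. Rounding $\mathrm{RROUND}(w)$ for $w\in[0,1]$: if $w\in[z_i,z_{i+1})$ for some $i\in\{0,\dots,K-1\}$, output the distribution $q$ on $\mathcal{Z}$ with $q_i=\frac1D\frac{z_{i+1}-w}{z_{i+1}(1-z_{i+1})}$,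 $q_{i+1}=\frac1D\frac{w-z_i}{z_i(1-z_i)}$, $q_j=0$ otherwise, $D$ the normalizing constant; if $w<z_0$ output the point mass at $z_0$, if $w\ge z_K$ the point mass at $z_K$. At round $t$, for each $i\in\{0,\dots,K\}$ let $\mu_{t,i}(w)=\exp\big(-\sum_{\tau<t}\pi_{\tau,i}\,\ell(w,y_\tau)\big)$, $w_{t,i}=\frac{\int_0^1 w\mu_{t,i}(w)dw}{\int_0^1\mu_{t,i}(w)dw}$ and $q_{t,i}=\mathrm{RROUND}(w_{t,i})$. Let $Q_t$ be the $(K+1)\times(K+1)$ matrix with columns $q_{t,0},\dots,q_{t,K}$, compute a probability vector $\pi_t$ with $Q_t\pi_t=\pi_t$, output $\mathcal{P}_t(z_i)=\pi_{t,i}$, draw the prediction from $\mathcal{P}_t$, and observe $y_t$. *)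

theory Defs
  imports "HOL-Analysis.Analysis"
begin

definition zgrid :: "nat \<Rightarrow> nat \<Rightarrow> real" where
  "zgrid K i =
     (if i = 0 then (sin (pi / (4 * real K)))^2
      else if i < K then (sin (pi * real i / (2 * real K)))^2
      else (cos (pi / (4 * real K)))^2)"

definition logloss :: "real \<Rightarrow> real \<Rightarrow> real" where
  "logloss w y = - y * ln w - (1 - y) * ln (1 - w)"

definition bernKL :: "real \<Rightarrow> real \<Rightarrow> real" where
  "bernKL q p = q * ln (q / p) + (1 - q) * ln ((1 - q) / (1 - p))"

text \<open>Randomized rounding RROUND(w): a distribution on indices 0..K (index j stands for z_j).\<close>
definition rround :: "nat \<Rightarrow> real \<Rightarrow> nat \<Rightarrow> real" where
  "rround K w j =
     (if w < zgrid K 0 then (if j = 0 then 1 else 0)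
      else if zgrid K K \<le> w then (if j = K then 1 else 0)
      else
        (let i = (THE i. i < K \<and> zgrid K i \<le> w \<and> w < zgrid K (Suc i));
             a = (zgrid K (Suc i) - w) / (zgrid K (Suc i) * (1 - zgrid K (Suc i)));
             b = (w - zgrid K i) / (zgrid K i * (1 - zgrid K i))
         in if j = i then a / (a + b) else if j = Suc i then b / (a + b) else 0))"

text \<open>Unnormalised exponential-weights density mu_{t,i}(w); pi t i is the weight of z_i at round t.\<close>
definition mu_bm :: "(nat \<Rightarrow> real) \<Rightarrow> (nat \<Rightarrow> nat \<Rightarrow> real) \<Rightarrow> nat \<Rightarrow> nat \<Rightarrow> real \<Rightarrow> real" where
  "mu_bm y \<pi> t i w = exp (- (\<Sum>\<tau>\<in>{1..<t}. \<pi> \<tau> i * logloss w (y \<tau>)))"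

definition wmean_bm :: "(nat \<Rightarrow> real) \<Rightarrow> (nat \<Rightarrow> nat \<Rightarrow> real) \<Rightarrow> nat \<Rightarrow> nat \<Rightarrow> real" where
  "wmean_bm y \<pi> t i =
     integral {0..1} (\<lambda>w. w * mu_bm y \<pi> t i w) / integral {0..1} (\<lambda>w. mu_bm y \<pi> t i w)"

text \<open>\<pi> is a valid run of BM-log with parameter K on rounds 1..T against outcomes y:
  at each round t, \<pi> t is a probability vector on {0..K} that is a fixed point of Q_t,
  where column i of Q_t is RROUND(w_{t,i}) (so (Q_t \<pi>)_j = sum_i q_{t,i}(j) \<pi>_i).\<close>
definition bm_log_run :: "nat \<Rightarrow> nat \<Rightarrow> (nat \<Rightarrow> real) \<Rightarrow> (nat \<Rightarrow> nat \<Rightarrow> real) \<Rightarrow> bool" where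
  "bm_log_run K T y \<pi> \<longleftrightarrow>
     (\<forall>t\<in>{1..T}.
        (\<forall>i\<le>K. 0 \<le> \<pi> t i) \<and> (\<Sum>i\<le>K. \<pi> t i) = 1 \<and>
        (\<forall>j\<le>K. (\<Sum>i\<le>K. rround K (wmean_bm y \<pi> t i) j * \<pi> t i) = \<pi> t j))"

text \<open>Empirical frequency rho~_p for p = z_i (0/0 = 0 is HOL's division convention).\<close>
definition rho_tilde :: "nat \<Rightarrow> (nat \<Rightarrow> real) \<Rightarrow> (nat \<Rightarrow> nat \<Rightarrow> real) \<Rightarrow> nat \<Rightarrow> real" where
  "rho_tilde T y \<pi> i = (\<Sum>t\<in>{1..T}. y t * \<pi> t i) / (\<Sum>t\<in>{1..T}. \<pi> t i)"

definition PKLCal :: "nat \<Rightarrow> nat \<Rightarrow> (nat \<Rightarrow> real) \<Rightarrow> (nat \<Rightarrow> nat \<Rightarrow> real) \<Rightarrow> real" where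
  "PKLCal K T y \<pi> =
     (\<Sum>i\<le>K. \<Sum>t\<in>{1..T}. \<pi> t i * bernKL (rho_tilde T y \<pi> i) (zgrid K i))"

end

theory Submission
  imports Defs
begin

text \<open>Each grid point \<open>z\<^sub>i\<close> acts as an expert that forecasts the posterior mean of a uniform
  prior updated with its \<open>\<pi>\<close>-weighted outcomes, i.e. Laplace's rule \<open>(A + 1) / (A + B + 2)\<close>.
  Exp-concavity of the log loss (Jensen for \<open>w powr p\<close> under a Beta law) bounds the weighted
  loss of this forecast by the drop of the potential \<open>ln (Beta (A + 1) (B + 1))\<close>, so over all
  rounds the expert loses at most \<open>1 + ln (16 T)\<close> more than the best constant forecast, which
  is the empirical frequency \<open>\<rho>\<^sub>i\<close>. The \<open>i\<close>-th term of PKLCal is exactly the loss of \<open>z\<^sub>i\<close> minus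
  the loss of \<open>\<rho>\<^sub>i\<close> on these weighted rounds. The fixed point \<open>Q\<^sub>t \<pi>\<^sub>t = \<pi>\<^sub>t\<close> turns the loss of
  the grid points into the expected loss of the rounded expert forecasts, and on the \<open>sin\<^sup>2\<close> grid
  rounding costs at most \<open>100 / K\<^sup>2\<close> per round. Hence
  \<open>PKLCal \<le> 100 T / K\<^sup>2 + (K + 1) (1 + ln (16 T))\<close>, and \<open>K \<approx> (T / ln T) powr (1/3)\<close>
  balances the two terms.\<close>

section \<open>Beta integrals and the Laplace forecaster\<close>

lemma Beta_real_pos: "0 < a \<Longrightarrow> 0 < b \<Longrightarrow> 0 < Beta a (b::real)"
  by (simp add: Beta_def Gamma_real_pos)

lemma Beta_one_one: "Beta 1 1 = (1::real)"
  using Gamma_fact[of 1, where ?'a = real] by (simp add: Beta_def)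

lemma Beta_plus1_left_real:
  assumes "0 < a" "0 < b"
  shows "Beta (a + 1) b = a / (a + b) * Beta a (b::real)"
  using Beta_plus1_left[of a b] assms by (auto simp: field_simps nonpos_Ints_def)

lemma has_integral_powr_Beta:
  fixes a b :: real
  assumes "-1 < a" "-1 < b"
  shows "((\<lambda>w. w powr a * (1 - w) powr b) has_integral Beta (a + 1) (b + 1)) {0<..<1}"
  using has_integral_Beta_real[of "a + 1" "b + 1"] assms by (simp add: has_integral_Icc_iff_Ioo)

lemma powr_le_tangent:
  fixes u m p :: real
  assumes "0 < u" "0 < m" "0 \<le> p" "p \<le> 1"
  shows "u powr p \<le> m powr p * (p * u / m + (1 - p))"
proof -
  have "(u / m) powr p * 1 powr (1 - p) \<le> p * (u / m) + (1 - p) * 1"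
    by (rule Youngs_inequality_0) (use assms in auto)
  then have "m powr p * (u / m) powr p \<le> m powr p * (p * u / m + (1 - p))"
    by (intro mult_left_mono) auto
  then show ?thesis
    using assms by (simp add: powr_divide)
qed

text \<open>Jensen's inequality for the concave map \<open>w \<mapsto> w powr p\<close> under the Beta distribution,
  whose mean is \<open>a / (a + b)\<close>.\<close>
lemma Beta_add_left_le:
  fixes a b p :: real
  assumes a: "0 < a" and b: "0 < b" and p: "0 \<le> p" "p \<le> 1"
  shows "Beta (a + p) b \<le> (a / (a + b)) powr p * Beta a b"
proof -
  define m where "m = a / (a + b)"
  define f where "f w = w powr (a - 1) * (1 - w) powr (b - 1)" for w :: real
  have m: "0 < m" using a b by (simp add: m_def)
  have shifted: "((\<lambda>w. w powr q * f w) has_integral Beta (a + q) b) {0<..<1}" if "0 \<le> q" for q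
  proof -
    have "((\<lambda>w. w powr (a + q - 1) * (1 - w) powr (b - 1)) has_integral Beta (a + q) b) {0<..<1}"
      using has_integral_powr_Beta[of "a + q - 1" "b - 1"] a b that by simp
    then show ?thesis
      by (rule has_integral_cong[THEN iffD1, rotated])
         (auto simp: f_def powr_add[symmetric] algebra_simps)
  qed
  have mean: "p / m * Beta (a + 1) b + (1 - p) * Beta (a + 0) b = Beta a b"
    using m unfolding Beta_plus1_left_real[OF a b] m_def[symmetric] by (simp add: field_simps)
  have tangent: "((\<lambda>w. m powr p * (p / m * (w powr 1 * f w) + (1 - p) * (w powr 0 * f w)))
      has_integral m powr p * Beta a b) {0<..<1}"
    unfolding mean[symmetric] by (intro has_integral_mult_right has_integral_add shifted) auto
  have "Beta (a + p) b \<le> m powr p * Beta a b"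
  proof (rule has_integral_le[OF shifted[OF p(1)] tangent])
    fix w :: real assume w: "w \<in> {0<..<1}"
    have "w powr p * f w \<le> m powr p * (p * w / m + (1 - p)) * f w"
      using w m p by (intro mult_right_mono powr_le_tangent) (auto simp: f_def)
    then show "w powr p * f w \<le> m powr p * (p / m * (w powr 1 * f w) + (1 - p) * (w powr 0 * f w))"
      using w by (simp add: algebra_simps)
  qed
  then show ?thesis by (simp add: m_def)
qed

lemma logloss_mean_le_ln_Beta_diff:
  fixes a b p y :: real
  assumes a: "0 < a" and b: "0 < b" and p: "0 \<le> p" "p \<le> 1" and y: "y \<in> {0, 1}"
  shows "p * logloss (a / (a + b)) y \<le> ln (Beta a b) - ln (Beta (a + p * y) (b + p * (1 - y)))"
proof -
  have step: "p * - ln (c / (c + d)) \<le> ln (Beta c d) - ln (Beta (c + p) d)"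
    if c: "0 < c" and d: "0 < d" for c d :: real
  proof -
    have "ln (Beta (c + p) d) \<le> ln ((c / (c + d)) powr p * Beta c d)"
      using Beta_add_left_le[OF c d p] Beta_real_pos c d p by simp
    also have "\<dots> = p * ln (c / (c + d)) + ln (Beta c d)"
      using c d Beta_real_pos[OF c d] by (simp add: ln_mult ln_powr)
    finally show ?thesis by simp
  qed
  consider "y = 1" | "y = 0" using y by auto
  then show ?thesis
  proof cases
    case 1
    then show ?thesis using step[OF a b] by (simp add: logloss_def)
  next
    case 2
    have "1 - a / (a + b) = b / (b + a)" using a b by (simp add: field_simps)
    then show ?thesis using step[OF b a] 2 by (simp add: logloss_def Beta_commute)
  qed
qed

definition max_loglik :: "real \<Rightarrow> real \<Rightarrow> real" where
  "max_loglik a b = a * ln (a / (a + b)) + b * ln (1 - a / (a + b))"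

lemma mult_ln_diff_le:
  fixes c u w :: real
  assumes "0 \<le> c" "0 \<le> u" "0 < w" "c = 0 \<or> 0 < u"
  shows "c * (ln u - ln w) \<le> c * (u / w - 1)"
  using assms
proof (cases "c = 0")
  case False
  then have "0 < u" using assms by simp
  then have "ln u - ln w \<le> u / w - 1"
    using assms ln_le_minus_one[of "u / w"] by (simp add: ln_div)
  then show ?thesis using assms by (simp add: mult_left_mono)
qed simp

lemma powr_ge_max_loglik:
  fixes a b w :: real
  assumes a: "0 \<le> a" and b: "0 \<le> b" and w: "0 < w" "w < 1"
    and near: "(a + b) * (a / (a + b) - w)\<^sup>2 \<le> w * (1 - w)"
  shows "exp (max_loglik a b - 1) \<le> w powr a * (1 - w) powr b"
proof -
  define \<rho> where "\<rho> = a / (a + b)"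
  have \<rho>: "0 \<le> \<rho> \<and> \<rho> \<le> 1 \<and> (a = 0 \<or> 0 < \<rho>) \<and> (b = 0 \<or> 0 < 1 - \<rho>)"
  proof (cases "a + b = 0")
    case False
    then have "0 < a + b" using a b by simp
    then show ?thesis using a b by (auto simp: \<rho>_def field_simps)
  qed (use a b in \<open>auto simp: \<rho>_def\<close>)
  have "a * (ln \<rho> - ln w) + b * (ln (1 - \<rho>) - ln (1 - w))
      \<le> a * (\<rho> / w - 1) + b * ((1 - \<rho>) / (1 - w) - 1)"
    using a b w \<rho> by (intro add_mono mult_ln_diff_le) auto
  also have "\<dots> = (a + b) * (\<rho> - w)\<^sup>2 / (w * (1 - w))"
  proof (cases "a + b = 0")
    case False
    have "(a + b) * \<rho> * (\<rho> / w - 1) + (a + b) * (1 - \<rho>) * ((1 - \<rho>) / (1 - w) - 1)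
        = (a + b) * (\<rho> - w)\<^sup>2 / (w * (1 - w))"
      using w by (simp add: field_simps power2_eq_square)
    moreover have "(a + b) * \<rho> = a" "(a + b) * (1 - \<rho>) = b"
      using False by (simp_all add: \<rho>_def field_simps)
    ultimately show ?thesis by simp
  qed (use a b in \<open>simp add: add_nonneg_eq_0_iff\<close>)
  also have "\<dots> \<le> 1"
    using near w by (simp add: \<rho>_def divide_le_eq)
  finally have "max_loglik a b - 1 \<le> a * ln w + b * ln (1 - w)"
    by (simp add: max_loglik_def \<rho>_def algebra_simps)
  then show ?thesis
    using w by (simp add: powr_def exp_add[symmetric])
qed

lemma interval_near_mode_exists:
  fixes n \<rho> :: real
  assumes n: "0 \<le> n" and \<rho>: "0 \<le> \<rho>" "\<rho> \<le> 1"
  defines "d \<equiv> 1 / (16 * max n 1)"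
  shows "\<exists>c. 0 < c \<and> c + d < 1 \<and> (\<forall>w\<in>{c..c+d}. n * (\<rho> - w)\<^sup>2 \<le> w * (1 - w))"
proof -
  have d: "0 < d" "d \<le> 1/16" by (auto simp: d_def field_simps)
  have nd: "n * (4 * d\<^sup>2) \<le> d / 4"
  proof -
    have "n * (4 * d\<^sup>2) \<le> max n 1 * (4 * d\<^sup>2)" by (intro mult_right_mono) auto
    also have "\<dots> = d / 4" by (simp add: d_def power2_eq_square field_simps)
    finally show ?thesis .
  qed
  \<comment> \<open>an interval of length \<open>d\<close> within \<open>2 d\<close> of \<open>\<rho>\<close>, on the side away from the nearer end of \<open>[0, 1]\<close>\<close>
  define c where "c = (if \<rho> \<le> 1/2 then \<rho> + d else \<rho> - 2 * d)"
  have c: "0 < c" "c + d < 1" using d \<rho> by (auto simp: c_def)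
  have "n * (\<rho> - w)\<^sup>2 \<le> w * (1 - w)" if w: "w \<in> {c..c+d}" for w
  proof -
    have "\<bar>\<rho> - w\<bar> \<le> 2 * d" using w d by (auto simp: c_def split: if_splits)
    then have "(\<rho> - w)\<^sup>2 \<le> 4 * d\<^sup>2"
      using abs_le_square_iff[of "\<rho> - w" "2 * d"] d by (simp add: power_mult_distrib)
    then have "n * (\<rho> - w)\<^sup>2 \<le> d / 4"
      using nd n mult_left_mono by fastforce
    also have "d / 4 \<le> w * (1 - w)"
    proof -
      have "d \<le> w \<and> 1/4 \<le> 1 - w \<or> 1/4 \<le> w \<and> d \<le> 1 - w"
        using w d \<rho> by (auto simp: c_def split: if_splits)
      then show ?thesis
        using mult_mono[of d w "1/4" "1 - w"] mult_mono[of "1/4" w d "1 - w"] d by auto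
    qed
    finally show ?thesis .
  qed
  with c show ?thesis by blast
qed

lemma Beta_ge_max_loglik:
  fixes a b :: real
  assumes a: "0 \<le> a" and b: "0 \<le> b"
  shows "exp (max_loglik a b - 1) / (16 * max (a + b) 1) \<le> Beta (a + 1) (b + 1)"
proof -
  define d where "d = 1 / (16 * max (a + b) 1)"
  define f where "f w = w powr a * (1 - w) powr b" for w :: real
  have \<rho>: "0 \<le> a / (a + b)" "a / (a + b) \<le> 1" using a b by (auto simp: divide_le_eq)
  obtain c where c: "0 < c" "c + d < 1"
    and near: "\<forall>w\<in>{c..c+d}. (a + b) * (a / (a + b) - w)\<^sup>2 \<le> w * (1 - w)"
    using interval_near_mode_exists[OF _ \<rho>, of "a + b"] a b unfolding d_def by auto
  have sub: "{c..c+d} \<subseteq> {0<..<1}" using c by auto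
  have f: "(f has_integral Beta (a + 1) (b + 1)) {0<..<1}"
    unfolding f_def using a b by (intro has_integral_powr_Beta) auto
  then have f_on: "f integrable_on {c..c+d}"
    by (meson has_integral_integrable integrable_on_subinterval sub)
  have "exp (max_loglik a b - 1) * d = integral {c..c+d} (\<lambda>w. exp (max_loglik a b - 1))"
    using d_def by simp
  also have "\<dots> \<le> integral {c..c+d} f"
    using f_on near sub unfolding f_def by (intro integral_le powr_ge_max_loglik a b) auto
  also have "\<dots> \<le> integral {0<..<1} f"
    using f f_on sub by (intro integral_subset_le) (auto simp: f_def)
  also have "\<dots> = Beta (a + 1) (b + 1)"
    using f by (rule integral_unique)
  finally show ?thesis by (simp add: d_def)
qed


lemma ln_Beta_ge_max_loglik:
  fixes a b :: real
  assumes "0 \<le> a" "0 \<le> b"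
  shows "max_loglik a b - 1 - ln (16 * max (a + b) 1) \<le> ln (Beta (a + 1) (b + 1))"
proof -
  have "ln (exp (max_loglik a b - 1) / (16 * max (a + b) 1)) \<le> ln (Beta (a + 1) (b + 1))"
    using Beta_ge_max_loglik[OF assms] Beta_real_pos[of "a + 1" "b + 1"] assms
    by (subst ln_le_cancel_iff) auto
  moreover have "ln (exp (max_loglik a b - 1) / (16 * max (a + b) 1))
      = max_loglik a b - 1 - ln (16 * max (a + b) 1)"
    by (subst ln_div) auto
  ultimately show ?thesis by linarith
qed

section \<open>The sine-squared grid\<close>

definition grid_angle :: "nat \<Rightarrow> nat \<Rightarrow> real" where
  "grid_angle K i = pi *
     (if i = 0 then 1 / (4 * real K) else if i < K then real i / (2 * real K) else 1/2 - 1 / (4 * real K))"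

lemma zgrid_eq_sin_grid_angle: "zgrid K i = (sin (grid_angle K i))\<^sup>2"
proof -
  have "cos (pi / (4 * real K)) = sin (pi * (1/2 - 1 / (4 * real K)))"
    by (simp add: cos_sin_eq right_diff_distrib)
  then show ?thesis
    by (simp add: zgrid_def grid_angle_def)
qed

lemma grid_angle_bounds:
  assumes "2 \<le> K"
  shows "0 < grid_angle K i" "grid_angle K i < pi / 2"
proof -
  have "real i < real K" if "i < K" using that by simp
  then have "0 < grid_angle K i / pi \<and> grid_angle K i / pi < 1/2"
    using assms by (auto simp: grid_angle_def field_simps)
  then show "0 < grid_angle K i" "grid_angle K i < pi / 2"
    by (simp_all add: field_simps)
qed

lemma grid_angle_strict_mono:
  assumes K: "2 \<le> K" and ij: "i < j" "j \<le> K"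
  shows "grid_angle K i < grid_angle K j"
proof -
  have "real i + 1 \<le> real j" "real j \<le> real K" "2 \<le> real K" using ij K by auto
  moreover have "real K * (real i + 1) \<le> real K * real K" if "i < K"
    using that by (intro mult_left_mono) auto
  ultimately have "grid_angle K i / pi < grid_angle K j / pi"
    using ij by (auto simp: grid_angle_def field_simps)
  then show ?thesis by (simp add: divide_strict_right_mono_neg field_simps)
qed

lemma grid_angle_steps:
  assumes K: "2 \<le> K" and i: "i < K"
  shows "grid_angle K (Suc i) - grid_angle K i \<le> pi / (2 * real K)"
    and "grid_angle K (Suc i) \<le> 2 * grid_angle K i"
    and "pi / 2 - grid_angle K i \<le> 2 * (pi / 2 - grid_angle K (Suc i))"
proof -
  define r where "r j = grid_angle K j / pi" for j
  have angle: "grid_angle K j = pi * r j" for j by (simp add: r_def)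
  have r: "r j = (if j = 0 then 1 / (4 * real K) else if j < K then real j / (2 * real K)
      else 1/2 - 1 / (4 * real K))" for j
    by (simp add: r_def grid_angle_def)
  have K2: "2 \<le> real K" using K by simp
  consider "i = 0" | "0 < i" "Suc i < K" | "0 < i" "Suc i = K" using i by linarith
  then have "r (Suc i) - r i \<le> 1 / (2 * real K) \<and> r (Suc i) \<le> 2 * r i \<and>
      1/2 - r i \<le> 2 * (1/2 - r (Suc i))"
  proof cases
    case 1
    then show ?thesis using K K2 by (simp add: r field_simps)
  next
    case 2
    then have "real K * (real i + 2) \<le> real K * real K" by (intro mult_left_mono) auto
    then show ?thesis using 2 K2 by (simp add: r field_simps)
  next
    case 3
    then have "real i + 1 = real K" by linarith
    then have e: "r i = 1/2 - 1 / (2 * real K)" "r (Suc i) = 1/2 - 1 / (4 * real K)"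
      using 3 K2 by (simp_all add: r field_simps)
    show ?thesis unfolding e using K2 by (simp add: field_simps)
  qed
  then have r: "r (Suc i) - r i \<le> 1 / (2 * real K)" "r (Suc i) \<le> 2 * r i"
    "1/2 - r i \<le> 2 * (1/2 - r (Suc i))"
    by auto
  show "grid_angle K (Suc i) - grid_angle K i \<le> pi / (2 * real K)"
    using mult_left_mono[OF r(1) pi_ge_zero] by (simp add: angle algebra_simps)
  show "grid_angle K (Suc i) \<le> 2 * grid_angle K i"
    using mult_left_mono[OF r(2) pi_ge_zero] by (simp add: angle algebra_simps)
  show "pi / 2 - grid_angle K i \<le> 2 * (pi / 2 - grid_angle K (Suc i))"
    using mult_left_mono[OF r(3) pi_ge_zero] by (simp add: angle algebra_simps)
qed

lemma zgrid_strict_mono: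
  assumes K: "2 \<le> K" and ij: "i < j" "j \<le> K"
  shows "zgrid K i < zgrid K j"
proof -
  have "sin (grid_angle K i) < sin (grid_angle K j)"
    using grid_angle_strict_mono[OF assms] grid_angle_bounds[OF K, of i] grid_angle_bounds[OF K, of j]
    by (intro sin_monotone_2pi) auto
  moreover have "0 < sin (grid_angle K i)"
    using grid_angle_bounds[OF K, of i] by (intro sin_gt_zero2) auto
  ultimately show ?thesis
    unfolding zgrid_eq_sin_grid_angle by (intro power_strict_mono) auto
qed

lemma zgrid_mono: "2 \<le> K \<Longrightarrow> i \<le> j \<Longrightarrow> j \<le> K \<Longrightarrow> zgrid K i \<le> zgrid K j"
  using zgrid_strict_mono[of K i j] by (cases "i = j") auto

lemma zgrid_bounds:
  assumes K: "2 \<le> K"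
  shows "0 < zgrid K i" "zgrid K i < 1"
proof -
  have "0 < sin (grid_angle K i)" "0 < cos (grid_angle K i)"
    using grid_angle_bounds[OF K, of i] by (auto intro: sin_gt_zero2 cos_gt_zero)
  then show "0 < zgrid K i" "zgrid K i < 1"
    by (simp_all add: zgrid_eq_sin_grid_angle) (simp add: sin_squared_eq)
qed

lemma pi_squared_le_16: "pi\<^sup>2 \<le> 16"
  using power_mono[of pi 4 2] pi_less_4 pi_gt_zero by simp

lemma zgrid_ends:
  assumes K: "2 \<le> K"
  shows "zgrid K 0 \<le> 1 / (real K)\<^sup>2" "1 - zgrid K K \<le> 1 / (real K)\<^sup>2"
proof -
  define x where "x = pi / (4 * real K)"
  have "0 \<le> sin x" "sin x \<le> x"
    using K pi_gt_zero by (auto intro!: sin_ge_zero sin_x_le_x simp: x_def divide_le_eq)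
  then have "(sin x)\<^sup>2 \<le> x\<^sup>2" by (intro power_mono)
  also have "\<dots> \<le> 1 / (real K)\<^sup>2"
    using pi_squared_le_16 K by (simp add: x_def power_divide field_simps)
  finally have "(sin x)\<^sup>2 \<le> 1 / (real K)\<^sup>2" .
  then show "zgrid K 0 \<le> 1 / (real K)\<^sup>2" "1 - zgrid K K \<le> 1 / (real K)\<^sup>2"
    using K by (simp_all add: zgrid_def x_def cos_squared_eq)
qed

lemma sin_le_double_sin:
  fixes x y :: real
  assumes "0 \<le> x" "x \<le> 2 * y" "y \<le> pi / 2"
  shows "sin x \<le> 2 * sin y"
proof -
  have "sin x = 2 * sin (x / 2) * cos (x / 2)" using sin_double[of "x / 2"] by simp
  also have "\<dots> \<le> 2 * sin (x / 2)"
    using assms by (simp add: mult_left_le sin_ge_zero)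
  also have "\<dots> \<le> 2 * sin y"
    using assms by (simp add: sin_monotone_2pi_le)
  finally show ?thesis .
qed

lemma sin_power2_diff:
  fixes x y :: real
  shows "(sin x)\<^sup>2 - (sin y)\<^sup>2 = sin (x - y) * sin (x + y)"
proof -
  have "sin (x - y) * sin (x + y) = (sin x)\<^sup>2 * (cos y)\<^sup>2 - (cos x)\<^sup>2 * (sin y)\<^sup>2"
    by (simp only: sin_diff sin_add) (simp add: power2_eq_square algebra_simps)
  also have "\<dots> = (sin x)\<^sup>2 - (sin y)\<^sup>2"
    by (simp add: cos_squared_eq algebra_simps)
  finally show ?thesis by simp
qed

text \<open>The two doubling hypotheses say that neither \<open>sin\<close> nor \<open>cos\<close> changes by more than a
  factor 2 between \<open>\<alpha>\<close> and \<open>\<beta>\<close>.\<close>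
lemma sin_power2_increment_le:
  fixes \<alpha> \<beta> :: real
  assumes "0 < \<alpha>" "\<alpha> < \<beta>" "\<beta> < pi / 2"
    and "\<beta> \<le> 2 * \<alpha>" "pi / 2 - \<alpha> \<le> 2 * (pi / 2 - \<beta>)"
  shows "0 \<le> (sin \<beta>)\<^sup>2 - (sin \<alpha>)\<^sup>2"
    and "(sin \<beta>)\<^sup>2 - (sin \<alpha>)\<^sup>2 \<le> 5 * (\<beta> - \<alpha>) * (sin \<alpha> * cos \<alpha>)"
proof -
  have sin_pos: "0 < sin \<alpha>" "0 < sin \<beta>" and cos_pos: "0 < cos \<alpha>" "0 < cos \<beta>"
    using assms by (auto intro: sin_gt_zero2 cos_gt_zero)
  have "cos \<beta> \<le> cos \<alpha>" using assms by (intro cos_monotone_0_pi_le) auto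
  have "sin \<beta> \<le> 2 * sin \<alpha>" using assms by (intro sin_le_double_sin) auto
  moreover have "cos \<alpha> \<le> 2 * cos \<beta>"
    using sin_le_double_sin[of "pi / 2 - \<alpha>" "pi / 2 - \<beta>"] assms by (simp add: sin_cos_eq)
  ultimately have "sin \<beta> * cos \<alpha> \<le> (2 * sin \<alpha>) * (2 * cos \<beta>)"
    using sin_pos cos_pos by (intro mult_mono) auto
  moreover have "sin \<alpha> * cos \<beta> \<le> sin \<alpha> * cos \<alpha>"
    using \<open>cos \<beta> \<le> cos \<alpha>\<close> sin_pos by (simp add: mult_left_mono)
  ultimately have "sin (\<beta> + \<alpha>) \<le> 5 * (sin \<alpha> * cos \<alpha>)"
    by (simp add: sin_add mult.commute)
  moreover have "0 \<le> sin (\<beta> + \<alpha>)" "0 \<le> sin (\<beta> - \<alpha>)" "sin (\<beta> - \<alpha>) \<le> \<beta> - \<alpha>"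
    using assms by (auto intro: sin_ge_zero sin_x_le_x)
  ultimately have "sin (\<beta> - \<alpha>) * sin (\<beta> + \<alpha>) \<le> (\<beta> - \<alpha>) * (5 * (sin \<alpha> * cos \<alpha>))"
    and "0 \<le> sin (\<beta> - \<alpha>) * sin (\<beta> + \<alpha>)"
    using assms by (auto intro: mult_mono)
  then show "0 \<le> (sin \<beta>)\<^sup>2 - (sin \<alpha>)\<^sup>2"
    and "(sin \<beta>)\<^sup>2 - (sin \<alpha>)\<^sup>2 \<le> 5 * (\<beta> - \<alpha>) * (sin \<alpha> * cos \<alpha>)"
    unfolding sin_power2_diff by (simp_all add: algebra_simps)
qed

lemma zgrid_spacing:
  assumes K: "2 \<le> K" and i: "i < K"
  shows "(zgrid K (Suc i) - zgrid K i)\<^sup>2 / (zgrid K i * (1 - zgrid K i)) \<le> 100 / (real K)\<^sup>2"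
proof -
  define \<alpha> where "\<alpha> = grid_angle K i"
  define \<beta> where "\<beta> = grid_angle K (Suc i)"
  note steps = grid_angle_steps[OF K i, folded \<alpha>_def \<beta>_def]
  have \<alpha>\<beta>: "0 < \<alpha>" "\<alpha> < \<beta>" "\<beta> < pi / 2"
    using grid_angle_bounds[OF K] grid_angle_strict_mono[OF K, of i "Suc i"] i
    by (auto simp: \<alpha>_def \<beta>_def)
  have sc: "0 < sin \<alpha> * cos \<alpha>"
    using \<alpha>\<beta> by (intro mult_pos_pos sin_gt_zero2 cos_gt_zero) auto
  have "((sin \<beta>)\<^sup>2 - (sin \<alpha>)\<^sup>2)\<^sup>2 \<le> (5 * (\<beta> - \<alpha>) * (sin \<alpha> * cos \<alpha>))\<^sup>2"
    using sin_power2_increment_le[OF \<alpha>\<beta> steps(2,3)] by (intro power_mono)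
  also have "\<dots> = 25 * (\<beta> - \<alpha>)\<^sup>2 * (sin \<alpha> * cos \<alpha>)\<^sup>2"
    unfolding power_mult_distrib by simp
  finally have "((sin \<beta>)\<^sup>2 - (sin \<alpha>)\<^sup>2)\<^sup>2 / (sin \<alpha> * cos \<alpha>)\<^sup>2 \<le> 25 * (\<beta> - \<alpha>)\<^sup>2"
    using sc by (subst pos_divide_le_eq) auto
  also have "\<dots> \<le> 25 * (pi / (2 * real K))\<^sup>2"
    using steps(1) \<alpha>\<beta> by (intro mult_left_mono power_mono) auto
  also have "\<dots> \<le> 100 / (real K)\<^sup>2"
    using pi_squared_le_16 K by (simp add: power_divide field_simps)
  finally show ?thesis
    by (simp add: zgrid_eq_sin_grid_angle \<alpha>_def \<beta>_def cos_squared_eq power_mult_distrib)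
qed


section \<open>Randomized rounding\<close>

lemma logloss_reflect: "logloss (1 - w) (1 - y) = logloss w y"
  by (simp add: logloss_def algebra_simps)

text \<open>The weights \<open>A\<close>, \<open>B\<close> of RROUND make the excess loss of the two-point mixture over \<open>w\<close>
  exactly the symmetric expression \<open>A B (b - a)\<close>, up to the slack in \<open>ln x \<le> x - 1\<close>.\<close>
lemma two_point_logloss_one_le:
  fixes a b w :: real
  assumes ab: "0 < a" "b < 1" and w: "a \<le> w" "w \<le> b"
  defines "A \<equiv> (b - w) / (b * (1 - b))" and "B \<equiv> (w - a) / (a * (1 - a))"
  shows "A * logloss a 1 + B * logloss b 1 \<le> (A + B) * logloss w 1 + A * B * (b - a)"
proof -
  have A: "0 \<le> A" and B: "0 \<le> B" using ab w by (simp_all add: A_def B_def)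
  have "A * (ln w - ln a) \<le> A * (w / a - 1)" "B * (ln w - ln b) \<le> B * (w / b - 1)"
    using A B ab w by (intro mult_ln_diff_le; simp)+
  moreover have "A * (w / a - 1) + B * (w / b - 1) = A * B * (b - a)"
  proof -
    define p q where "p = 1 - a" and "q = 1 - b"
    have nz: "a \<noteq> 0" "b \<noteq> 0" "p \<noteq> 0" "q \<noteq> 0" using ab w by (auto simp: p_def q_def)
    have e: "b - a = p - q" by (simp add: p_def q_def)
    show ?thesis
      unfolding A_def B_def e p_def[symmetric] q_def[symmetric] using nz by (simp add: field_simps)
  qed
  ultimately show ?thesis
    by (simp add: logloss_def algebra_simps)
qed

lemma two_point_logloss_le:
  fixes a b w y :: real
  assumes ab: "0 < a" "b < 1" and w: "a \<le> w" "w \<le> b" and y: "y \<in> {0, 1}"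
  defines "A \<equiv> (b - w) / (b * (1 - b))" and "B \<equiv> (w - a) / (a * (1 - a))"
  shows "A * logloss a y + B * logloss b y \<le> (A + B) * logloss w y + A * B * (b - a)"
proof (cases "y = 1")
  case False
  then have "y = 0" using y by simp
  have "B * logloss (1 - b) 1 + A * logloss (1 - a) 1
      \<le> (B + A) * logloss (1 - w) 1 + B * A * ((1 - a) - (1 - b))"
    using two_point_logloss_one_le[of "1 - b" "1 - a" "1 - w"] ab w
    by (simp add: A_def B_def mult.commute)
  then show ?thesis
    using logloss_reflect[of _ 0] \<open>y = 0\<close> by (simp add: algebra_simps)
qed (use two_point_logloss_one_le[OF assms(1-4)] in \<open>simp add: A_def B_def\<close>)

lemma sum_rround_below:
  assumes "w < zgrid K 0"
  shows "(\<Sum>j\<le>K. rround K w j * f j) = f 0"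
proof -
  have "(\<Sum>j\<le>K. rround K w j * f j) = (\<Sum>j\<le>K. if j = 0 then f j else 0)"
    using assms by (intro sum.cong) (auto simp: rround_def)
  then show ?thesis by simp
qed

lemma sum_rround_above:
  assumes "2 \<le> K" "zgrid K K \<le> w"
  shows "(\<Sum>j\<le>K. rround K w j * f j) = f K"
proof -
  have "(\<Sum>j\<le>K. rround K w j * f j) = (\<Sum>j\<le>K. if j = K then f j else 0)"
    using assms zgrid_mono[of K 0 K] by (intro sum.cong) (auto simp: rround_def)
  then show ?thesis by simp
qed

lemma rround_between:
  assumes K: "2 \<le> K" and i: "i < K" and w: "zgrid K i \<le> w" "w < zgrid K (Suc i)"
  defines "A \<equiv> (zgrid K (Suc i) - w) / (zgrid K (Suc i) * (1 - zgrid K (Suc i)))"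
    and "B \<equiv> (w - zgrid K i) / (zgrid K i * (1 - zgrid K i))"
  shows "rround K w j = (if j = i then A / (A + B) else if j = Suc i then B / (A + B) else 0)"
proof -
  have "(THE i. i < K \<and> zgrid K i \<le> w \<and> w < zgrid K (Suc i)) = i"
  proof (rule the_equality)
    fix j assume j: "j < K \<and> zgrid K j \<le> w \<and> w < zgrid K (Suc j)"
    have False if "j < i"
      using zgrid_mono[OF K, of "Suc j" i] that i j w by simp
    moreover have False if "i < j"
      using zgrid_mono[OF K, of "Suc i" j] that j w by simp
    ultimately show "j = i" using nat_neq_iff by blast
  qed (use i w in simp)
  moreover have "\<not> w < zgrid K 0" "\<not> zgrid K K \<le> w"
    using zgrid_mono[OF K, of 0 i] zgrid_mono[OF K, of "Suc i" K] i w by auto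
  ultimately show ?thesis
    by (simp add: rround_def A_def B_def Let_def)
qed

lemma zgrid_bracket:
  assumes "zgrid K 0 \<le> w" "w < zgrid K K"
  obtains i where "i < K" "zgrid K i \<le> w" "w < zgrid K (Suc i)"
  using ex_least_nat_less[of "\<lambda>i. w < zgrid K i" K] assms by (auto simp: not_less)

lemma logloss_clip_le:
  fixes w z y :: real
  assumes w: "0 < w" "w \<le> z" and z: "z \<le> 1/2" and y: "y \<in> {0, 1}"
  shows "logloss z y \<le> logloss w y + 2 * z"
proof (cases "y = 1")
  case True
  have "logloss z y = - ln z" "logloss w y = - ln w" by (simp_all add: logloss_def True)
  moreover have "ln w \<le> ln z" using w by simp
  ultimately show ?thesis using w by linarith
next
  case False
  have "- ln (1 - z) \<le> z / (1 - z)"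
    using ln_le_minus_one[of "1 / (1 - z)"] w z by (simp add: ln_div field_simps)
  also have "\<dots> \<le> 2 * z"
    using w z by (simp add: field_simps)
  finally have "- ln (1 - z) \<le> 2 * z" .
  moreover have "ln (1 - w) \<le> 0" using w z by simp
  moreover have "logloss z y = - ln (1 - z)" "logloss w y = - ln (1 - w)"
    using False y by (simp_all add: logloss_def)
  ultimately show ?thesis by linarith
qed

lemma expected_logloss_rround_between:
  assumes K: "2 \<le> K" and i: "i < K" and w: "zgrid K i \<le> w" "w < zgrid K (Suc i)"
    and y: "y \<in> {0, 1}"
  shows "(\<Sum>j\<le>K. rround K w j * logloss (zgrid K j) y) \<le> logloss w y + 100 / (real K)\<^sup>2"
proof -
  define a b where "a = zgrid K i" and "b = zgrid K (Suc i)"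
  define A B where "A = (b - w) / (b * (1 - b))" and "B = (w - a) / (a * (1 - a))"
  have ab: "0 < a" "a < 1" "b < 1"
    using zgrid_bounds[OF K] by (auto simp: a_def b_def)
  have A: "0 < A" and B: "0 \<le> B" using ab w by (simp_all add: A_def B_def a_def b_def)
  have "(\<Sum>j\<le>K. rround K w j * logloss (zgrid K j) y)
      = (\<Sum>j\<le>K. (if j = i then A / (A + B) * logloss a y else 0)
          + (if j = Suc i then B / (A + B) * logloss b y else 0))"
    unfolding rround_between[OF K i w] by (intro sum.cong) (auto simp: A_def B_def a_def b_def)
  also have "\<dots> = (A * logloss a y + B * logloss b y) / (A + B)"
    using i by (simp add: sum.distrib add_divide_distrib)
  also have "\<dots> \<le> ((A + B) * logloss w y + A * B * (b - a)) / (A + B)"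
    using two_point_logloss_le[of a b w y, folded A_def B_def] ab w y A B
    by (intro divide_right_mono) (auto simp: a_def b_def)
  also have "\<dots> = logloss w y + A * B * (b - a) / (A + B)"
    using A B by (simp add: add_divide_distrib)
  also have "A * B * (b - a) / (A + B) \<le> B * (b - a)"
  proof -
    have "A * B * (b - a) / (A + B) = A / (A + B) * (B * (b - a))" by simp
    also have "\<dots> \<le> 1 * (B * (b - a))"
      using A B w by (intro mult_right_mono) (auto simp: a_def b_def)
    finally show ?thesis by simp
  qed
  also have "\<dots> \<le> (b - a)\<^sup>2 / (a * (1 - a))"
  proof -
    have "(w - a) * (b - a) \<le> (b - a) * (b - a)" using w by (intro mult_right_mono) (auto simp: a_def b_def)
    then show ?thesis using ab by (simp add: B_def power2_eq_square divide_right_mono)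
  qed
  also have "\<dots> \<le> 100 / (real K)\<^sup>2"
    using zgrid_spacing[OF K i] by (simp add: a_def b_def)
  finally show ?thesis by simp
qed

lemma expected_logloss_rround_le:
  assumes K: "2 \<le> K" and w: "0 < w" "w < 1" and y: "y \<in> {0, 1}"
  shows "(\<Sum>j\<le>K. rround K w j * logloss (zgrid K j) y) \<le> logloss w y + 100 / (real K)\<^sup>2"
proof -
  have "2\<^sup>2 \<le> (real K)\<^sup>2" using K by (intro power_mono) auto
  then have "1 / (real K)\<^sup>2 \<le> 1 / 2\<^sup>2" using K by (intro divide_left_mono) auto
  then have small: "2 / (real K)\<^sup>2 \<le> 100 / (real K)\<^sup>2" "1 / (real K)\<^sup>2 \<le> 1/2"
    by (simp_all add: divide_right_mono)
  consider "w < zgrid K 0" | "zgrid K K \<le> w" | "zgrid K 0 \<le> w" "w < zgrid K K" by linarith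
  then show ?thesis
  proof cases
    case 1
    then have "logloss (zgrid K 0) y \<le> logloss w y + 2 * zgrid K 0"
      using w zgrid_ends[OF K] small y by (intro logloss_clip_le) auto
    then show ?thesis
      using 1 zgrid_ends[OF K] small by (simp add: sum_rround_below)
  next
    case 2
    then have "logloss (1 - zgrid K K) (1 - y) \<le> logloss (1 - w) (1 - y) + 2 * (1 - zgrid K K)"
      using w zgrid_ends[OF K] small y by (intro logloss_clip_le) auto
    then show ?thesis
      using 2 K zgrid_ends[OF K] small by (simp add: sum_rround_above logloss_reflect)
  next
    case 3
    then obtain i where "i < K" "zgrid K i \<le> w" "w < zgrid K (Suc i)"
      by (rule zgrid_bracket)
    then show ?thesis
      using expected_logloss_rround_between[OF K _ _ _ y] by blast
  qed
qed


section \<open>Runs of BM-log\<close>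

definition ones_before :: "(nat \<Rightarrow> real) \<Rightarrow> (nat \<Rightarrow> nat \<Rightarrow> real) \<Rightarrow> nat \<Rightarrow> nat \<Rightarrow> real" where
  "ones_before y \<pi> i t = (\<Sum>\<tau>\<in>{1..<t}. \<pi> \<tau> i * y \<tau>)"

definition zeros_before :: "(nat \<Rightarrow> real) \<Rightarrow> (nat \<Rightarrow> nat \<Rightarrow> real) \<Rightarrow> nat \<Rightarrow> nat \<Rightarrow> real" where
  "zeros_before y \<pi> i t = (\<Sum>\<tau>\<in>{1..<t}. \<pi> \<tau> i * (1 - y \<tau>))"

lemma mu_bm_eq_powr:
  assumes "0 < w" "w < 1"
  shows "mu_bm y \<pi> t i w = w powr ones_before y \<pi> i t * (1 - w) powr zeros_before y \<pi> i t"
proof -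
  have "- (\<pi> \<tau> i * logloss w (y \<tau>)) = \<pi> \<tau> i * y \<tau> * ln w + \<pi> \<tau> i * (1 - y \<tau>) * ln (1 - w)"
    for \<tau>
    by (simp add: logloss_def algebra_simps)
  then have "- (\<Sum>\<tau>\<in>{1..<t}. \<pi> \<tau> i * logloss w (y \<tau>))
      = ones_before y \<pi> i t * ln w + zeros_before y \<pi> i t * ln (1 - w)"
    by (simp add: ones_before_def zeros_before_def sum_negf[symmetric] sum.distrib sum_distrib_right)
  then show ?thesis
    using assms by (simp add: mu_bm_def powr_def exp_add)
qed

lemma wmean_bm_eq_laplace:
  assumes A: "0 \<le> ones_before y \<pi> i t" and B: "0 \<le> zeros_before y \<pi> i t"
  shows "wmean_bm y \<pi> t i = (ones_before y \<pi> i t + 1) / (ones_before y \<pi> i t + zeros_before y \<pi> i t + 2)"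
proof -
  define a b where "a = ones_before y \<pi> i t" and "b = zeros_before y \<pi> i t"
  have ab: "-1 < a" "-1 < a + 1" "-1 < b" using A B by (simp_all add: a_def b_def)
  have "((\<lambda>w. mu_bm y \<pi> t i w) has_integral Beta (a + 1) (b + 1)) {0<..<1}"
    using has_integral_powr_Beta[OF ab(1,3)]
    by (rule has_integral_cong[THEN iffD1, rotated]) (simp add: mu_bm_eq_powr a_def b_def)
  moreover have "((\<lambda>w. w * mu_bm y \<pi> t i w) has_integral Beta (a + 1 + 1) (b + 1)) {0<..<1}"
    using has_integral_powr_Beta[OF ab(2,3)]
    by (rule has_integral_cong[THEN iffD1, rotated]) (simp add: mu_bm_eq_powr a_def b_def powr_add)
  ultimately have "wmean_bm y \<pi> t i = Beta (a + 1 + 1) (b + 1) / Beta (a + 1) (b + 1)"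
    by (simp add: wmean_bm_def integral_open_interval_real integral_unique)
  also have "\<dots> = (a + 1) / (a + 1 + (b + 1))"
    using Beta_real_pos[of "a + 1" "b + 1"] ab by (subst Beta_plus1_left_real) auto
  finally show ?thesis by (simp add: a_def b_def)
qed

lemma bm_log_run_weight:
  assumes "bm_log_run K T y \<pi>" "t \<in> {1..T}" "i \<le> K"
  shows "0 \<le> \<pi> t i" "\<pi> t i \<le> 1"
proof -
  from assms(1,2) have nonneg: "\<forall>j\<le>K. 0 \<le> \<pi> t j" and total: "(\<Sum>j\<le>K. \<pi> t j) = 1"
    unfolding bm_log_run_def by blast+
  show "0 \<le> \<pi> t i" using nonneg assms(3) by blast
  have "\<pi> t i \<le> (\<Sum>j\<le>K. \<pi> t j)"
    using nonneg assms(3) by (intro member_le_sum) auto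
  then show "\<pi> t i \<le> 1" using total by simp
qed

lemma counts_before_nonneg:
  assumes run: "bm_log_run K T y \<pi>" and y: "\<forall>t\<in>{1..T}. y t \<in> {0, 1}"
    and i: "i \<le> K" and t: "t \<le> Suc T"
  shows "0 \<le> ones_before y \<pi> i t" "0 \<le> zeros_before y \<pi> i t"
proof -
  have "0 \<le> \<pi> \<tau> i * y \<tau> \<and> 0 \<le> \<pi> \<tau> i * (1 - y \<tau>)" if \<tau>: "\<tau> \<in> {1..<t}" for \<tau>
  proof -
    have "\<tau> \<in> {1..T}" using \<tau> t by auto
    then have "0 \<le> \<pi> \<tau> i" "y \<tau> \<in> {0, 1}" using bm_log_run_weight[OF run _ i] y by auto
    then show ?thesis by auto
  qed
  then show "0 \<le> ones_before y \<pi> i t" "0 \<le> zeros_before y \<pi> i t"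
    unfolding ones_before_def zeros_before_def by (auto intro: sum_nonneg)
qed

lemma expert_logloss_le:
  assumes run: "bm_log_run K T y \<pi>" and y: "\<forall>t\<in>{1..T}. y t \<in> {0, 1}" and i: "i \<le> K"
  defines "a \<equiv> ones_before y \<pi> i (Suc T)" and "b \<equiv> zeros_before y \<pi> i (Suc T)"
  shows "(\<Sum>t\<in>{1..T}. \<pi> t i * logloss (wmean_bm y \<pi> t i) (y t))
    \<le> 1 + ln (16 * max (a + b) 1) - max_loglik a b"
proof -
  define \<Phi> where "\<Phi> t = ln (Beta (ones_before y \<pi> i t + 1) (zeros_before y \<pi> i t + 1))" for t
  have "\<pi> t i * logloss (wmean_bm y \<pi> t i) (y t) \<le> \<Phi> t - \<Phi> (Suc t)" if t: "t \<in> {1..T}" for t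
  proof -
    define A B where "A = ones_before y \<pi> i t" and "B = zeros_before y \<pi> i t"
    have "0 \<le> A" "0 \<le> B" using counts_before_nonneg[OF run y i, of t] t by (auto simp: A_def B_def)
    then have "wmean_bm y \<pi> t i = (A + 1) / ((A + 1) + (B + 1))"
      by (simp add: A_def B_def wmean_bm_eq_laplace add_ac)
    moreover have "\<Phi> (Suc t) = ln (Beta (A + 1 + \<pi> t i * y t) (B + 1 + \<pi> t i * (1 - y t)))"
      using t by (simp add: \<Phi>_def A_def B_def ones_before_def zeros_before_def algebra_simps)
    ultimately show ?thesis
      using logloss_mean_le_ln_Beta_diff[of "A + 1" "B + 1" "\<pi> t i" "y t"] \<open>0 \<le> A\<close> \<open>0 \<le> B\<close>
        bm_log_run_weight[OF run t i] y t
      by (simp add: \<Phi>_def A_def B_def)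
  qed
  then have "(\<Sum>t\<in>{1..T}. \<pi> t i * logloss (wmean_bm y \<pi> t i) (y t))
      \<le> (\<Sum>t\<in>{1..T}. \<Phi> t - \<Phi> (Suc t))"
    by (rule sum_mono)
  also have "\<dots> = \<Phi> 1 - \<Phi> (Suc T)"
    using sum_Suc_diff[of 1 T "\<lambda>t. - \<Phi> t"] by simp
  finally have "(\<Sum>t\<in>{1..T}. \<pi> t i * logloss (wmean_bm y \<pi> t i) (y t)) \<le> \<Phi> 1 - \<Phi> (Suc T)" .
  moreover have "\<Phi> 1 = 0"
    by (simp add: \<Phi>_def ones_before_def zeros_before_def Beta_one_one)
  moreover have "max_loglik a b - 1 - ln (16 * max (a + b) 1) \<le> \<Phi> (Suc T)"
    using counts_before_nonneg[OF run y i] ln_Beta_ge_max_loglik by (simp add: \<Phi>_def a_def b_def)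
  ultimately show ?thesis by linarith
qed

lemma sum_logloss_eq:
  "(\<Sum>t\<in>S. p t * logloss z (y t))
     = (\<Sum>t\<in>S. y t * p t) * logloss z 1 + (\<Sum>t\<in>S. p t * (1 - y t)) * logloss z 0"
proof -
  have "p t * logloss z (y t) = y t * p t * logloss z 1 + p t * (1 - y t) * logloss z 0" for t
    by (simp add: logloss_def algebra_simps)
  then show ?thesis by (simp add: sum.distrib sum_distrib_right)
qed

lemma bernKL_scaled_eq:
  fixes a b z :: real
  assumes a: "0 \<le> a" and b: "0 \<le> b" and z: "0 < z" "z < 1"
  shows "(a + b) * bernKL (a / (a + b)) z = a * logloss z 1 + b * logloss z 0 + max_loglik a b"
proof (cases "a + b = 0")
  case False
  define \<rho> where "\<rho> = a / (a + b)"
  have ea: "(a + b) * \<rho> = a" and eb: "(a + b) * (1 - \<rho>) = b"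
    using False by (simp_all add: \<rho>_def field_simps)
  have "a = 0 \<or> 0 < \<rho>" "b = 0 \<or> 0 < 1 - \<rho>"
    using a b False by (auto simp: \<rho>_def field_simps)
  then have "a * ln (\<rho> / z) = a * (ln \<rho> - ln z)"
    and "b * ln ((1 - \<rho>) / (1 - z)) = b * (ln (1 - \<rho>) - ln (1 - z))"
    using z by (auto simp: ln_div)
  moreover have "(a + b) * bernKL \<rho> z
      = ((a + b) * \<rho>) * ln (\<rho> / z) + ((a + b) * (1 - \<rho>)) * ln ((1 - \<rho>) / (1 - z))"
    by (simp add: bernKL_def algebra_simps)
  then have "(a + b) * bernKL \<rho> z = a * ln (\<rho> / z) + b * ln ((1 - \<rho>) / (1 - z))"
    unfolding ea eb .
  ultimately show ?thesis
    by (simp add: \<rho>_def max_loglik_def logloss_def algebra_simps)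
qed (use a b in \<open>simp add: add_nonneg_eq_0_iff max_loglik_def\<close>)

lemma calibration_term_le:
  assumes K: "2 \<le> K" and run: "bm_log_run K T y \<pi>" and y: "\<forall>t\<in>{1..T}. y t \<in> {0, 1}"
    and T: "1 \<le> T" and i: "i \<le> K"
  shows "(\<Sum>t\<in>{1..T}. \<pi> t i * bernKL (rho_tilde T y \<pi> i) (zgrid K i))
    \<le> (\<Sum>t\<in>{1..T}. \<pi> t i * logloss (zgrid K i) (y t) - \<pi> t i * logloss (wmean_bm y \<pi> t i) (y t))
       + (1 + ln (16 * real T))"
proof -
  define a b where "a = ones_before y \<pi> i (Suc T)" and "b = zeros_before y \<pi> i (Suc T)"
  define z where "z = zgrid K i"
  have ones: "(\<Sum>t\<in>{1..T}. y t * \<pi> t i) = a" and zeros: "(\<Sum>t\<in>{1..T}. \<pi> t i * (1 - y t)) = b"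
    by (simp_all add: a_def b_def ones_before_def zeros_before_def atLeastLessThanSuc_atLeastAtMost
        mult.commute)
  have total: "(\<Sum>t\<in>{1..T}. \<pi> t i) = a + b"
    unfolding ones[symmetric] zeros[symmetric] by (simp add: sum.distrib[symmetric] algebra_simps)
  have "0 \<le> a" "0 \<le> b" using counts_before_nonneg[OF run y i] by (auto simp: a_def b_def)
  have "(\<Sum>t\<in>{1..T}. \<pi> t i * bernKL (rho_tilde T y \<pi> i) z) = (a + b) * bernKL (a / (a + b)) z"
    by (simp only: rho_tilde_def sum_distrib_right[symmetric] ones total)
  also have "\<dots> = (\<Sum>t\<in>{1..T}. \<pi> t i * logloss z (y t)) + max_loglik a b"
    unfolding sum_logloss_eq ones zeros
    using \<open>0 \<le> a\<close> \<open>0 \<le> b\<close> zgrid_bounds[OF K] by (simp add: bernKL_scaled_eq z_def)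
  also have "max_loglik a b \<le> 1 + ln (16 * max (a + b) 1)
      - (\<Sum>t\<in>{1..T}. \<pi> t i * logloss (wmean_bm y \<pi> t i) (y t))"
    using expert_logloss_le[OF run y i] by (simp add: a_def b_def)
  also have "ln (16 * max (a + b) 1) \<le> ln (16 * real T)"
  proof -
    have "a + b \<le> (\<Sum>t\<in>{1..T}. 1)"
      unfolding total[symmetric] by (intro sum_mono) (use bm_log_run_weight[OF run _ i] in auto)
    then show ?thesis using T by simp
  qed
  finally show ?thesis by (simp add: z_def sum_subtractf)
qed

lemma grid_logloss_le_expert_logloss:
  assumes K: "2 \<le> K" and run: "bm_log_run K T y \<pi>" and y: "\<forall>t\<in>{1..T}. y t \<in> {0, 1}"
    and t: "t \<in> {1..T}"
  shows "(\<Sum>i\<le>K. \<pi> t i * logloss (zgrid K i) (y t))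
      \<le> (\<Sum>i\<le>K. \<pi> t i * logloss (wmean_bm y \<pi> t i) (y t)) + 100 / (real K)\<^sup>2"
proof -
  define q where "q i j = rround K (wmean_bm y \<pi> t i) j" for i j
  have fixed_point: "\<And>j. j \<le> K \<Longrightarrow> (\<Sum>i\<le>K. q i j * \<pi> t i) = \<pi> t j"
    and total: "(\<Sum>i\<le>K. \<pi> t i) = 1"
    using run t unfolding bm_log_run_def q_def by auto
  have "(\<Sum>j\<le>K. \<pi> t j * logloss (zgrid K j) (y t))
      = (\<Sum>j\<le>K. \<Sum>i\<le>K. \<pi> t i * (q i j * logloss (zgrid K j) (y t)))"
  proof (intro sum.cong refl)
    fix j assume "j \<in> {..K}"
    have "(\<Sum>i\<le>K. \<pi> t i * (q i j * logloss (zgrid K j) (y t)))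
        = (\<Sum>i\<le>K. q i j * \<pi> t i) * logloss (zgrid K j) (y t)"
      unfolding sum_distrib_right by (simp add: mult_ac)
    also have "\<dots> = \<pi> t j * logloss (zgrid K j) (y t)"
      using fixed_point \<open>j \<in> {..K}\<close> by simp
    finally show "\<pi> t j * logloss (zgrid K j) (y t)
        = (\<Sum>i\<le>K. \<pi> t i * (q i j * logloss (zgrid K j) (y t)))" by simp
  qed
  also have "\<dots> = (\<Sum>i\<le>K. \<pi> t i * (\<Sum>j\<le>K. q i j * logloss (zgrid K j) (y t)))"
    by (subst sum.swap) (simp add: sum_distrib_left)
  also have "\<dots> \<le> (\<Sum>i\<le>K. \<pi> t i * (logloss (wmean_bm y \<pi> t i) (y t) + 100 / (real K)\<^sup>2))"
  proof (intro sum_mono mult_left_mono)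
    fix i assume i: "i \<in> {..K}"
    have "0 \<le> ones_before y \<pi> i t" "0 \<le> zeros_before y \<pi> i t"
      using counts_before_nonneg[OF run y, of i t] i t by auto
    then have "0 < wmean_bm y \<pi> t i" "wmean_bm y \<pi> t i < 1"
      by (simp_all add: wmean_bm_eq_laplace)
    then show "(\<Sum>j\<le>K. q i j * logloss (zgrid K j) (y t)) \<le> logloss (wmean_bm y \<pi> t i) (y t) + 100 / (real K)\<^sup>2"
      unfolding q_def using y t by (intro expected_logloss_rround_le K) auto
    show "0 \<le> \<pi> t i" using bm_log_run_weight[OF run t] i by auto
  qed
  also have "\<dots> = (\<Sum>i\<le>K. \<pi> t i * logloss (wmean_bm y \<pi> t i) (y t)) + 100 / (real K)\<^sup>2"
    unfolding distrib_left sum.distrib sum_distrib_right[symmetric] total by simp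
  finally show ?thesis .
qed

lemma PKLCal_le:
  assumes K: "2 \<le> K" and T: "1 \<le> T" and run: "bm_log_run K T y \<pi>"
    and y: "\<forall>t\<in>{1..T}. y t \<in> {0, 1}"
  shows "PKLCal K T y \<pi> \<le> real T * (100 / (real K)\<^sup>2) + real (Suc K) * (1 + ln (16 * real T))"
proof -
  define R where "R = 1 + ln (16 * real T)"
  define loss_z loss_w where "loss_z t i = \<pi> t i * logloss (zgrid K i) (y t)"
    and "loss_w t i = \<pi> t i * logloss (wmean_bm y \<pi> t i) (y t)" for t i
  have "PKLCal K T y \<pi> \<le> (\<Sum>i\<le>K. (\<Sum>t\<in>{1..T}. loss_z t i - loss_w t i) + R)"
    unfolding PKLCal_def loss_z_def loss_w_def R_def
    by (intro sum_mono calibration_term_le[OF K run y T]) auto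
  also have "\<dots> = (\<Sum>t\<in>{1..T}. (\<Sum>i\<le>K. loss_z t i) - (\<Sum>i\<le>K. loss_w t i)) + real (Suc K) * R"
    by (simp add: sum.distrib sum_subtractf sum.swap[of _ "{..K}"])
  also have "\<dots> \<le> (\<Sum>t\<in>{1..T}. 100 / (real K)\<^sup>2) + real (Suc K) * R"
    using grid_logloss_le_expert_logloss[OF K run y] unfolding loss_z_def loss_w_def
    by (intro add_right_mono sum_mono) fastforce
  finally show ?thesis by (simp add: R_def)
qed


section \<open>The rate\<close>

lemma max_2_nat_round_bounds:
  fixes X :: real
  assumes X: "0 < X" and K: "K = max 2 (nat \<lfloor>X\<rfloor>) \<or> K = max 2 (nat \<lceil>X\<rceil>)"
  shows "X / 2 \<le> real K" "real K \<le> X + 2"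
proof -
  obtain u where u: "real K = max 2 u" "X - 1 < u" "u < X + 1"
  proof (cases "K = max 2 (nat \<lfloor>X\<rfloor>)")
    case True
    then have "real K = max 2 (of_int \<lfloor>X\<rfloor>)" using X by (simp add: of_nat_max)
    then show ?thesis by (rule that) linarith+
  next
    case False
    then have "real K = max 2 (of_int \<lceil>X\<rceil>)" using K X by (simp add: of_nat_max)
    then show ?thesis by (rule that) linarith+
  qed
  show "X / 2 \<le> real K" "real K \<le> X + 2"
    using u X by (simp_all add: max_def)
qed

lemma rate_powr_identities:
  fixes T L :: real
  assumes L: "0 < L" and LT: "L \<le> T"
  defines "X \<equiv> (T / L) powr (1/3)" and "P \<equiv> T powr (1/3) * L powr (2/3)"
  shows "T / X\<^sup>2 = P" "X * L = P" "L \<le> P"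
proof -
  define u v where "u = T powr (1/3)" and "v = L powr (1/3)"
  have pos: "0 < u" "0 < v" using L LT by (simp_all add: u_def v_def)
  have cube: "x = (x powr (1/3)) ^ 3" "x powr (2/3) = (x powr (1/3))\<^sup>2" if "0 < x" for x :: real
    using that by (simp_all flip: powr_realpow add: powr_powr)
  have e: "T = u ^ 3" "L = v ^ 3" "X = u / v" "P = u * v\<^sup>2"
    using cube[of T] cube[of L] L LT by (simp_all add: u_def v_def X_def P_def powr_divide)
  have "v \<le> u" using L LT by (simp add: u_def v_def powr_mono2)
  then show "T / X\<^sup>2 = P" "X * L = P" "L \<le> P"
    unfolding e using pos by (simp_all add: field_simps power2_eq_square power3_eq_cube mult_right_mono)
qed

lemma rate_bound:
  fixes T K :: nat
  assumes T: "3 \<le> T"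
    and K: "K = max 2 (nat \<lfloor>(real T / ln (real T)) powr (1/3)\<rfloor>) \<or>
            K = max 2 (nat \<lceil>(real T / ln (real T)) powr (1/3)\<rceil>)"
  shows "real T * (100 / (real K)\<^sup>2) + real (Suc K) * (1 + ln (16 * real T))
         \<le> 500 * real T powr (1/3) * ln (real T) powr (2/3)"
proof -
  define L X P where "L = ln (real T)" and "X = (real T / L) powr (1/3)"
    and "P = real T powr (1/3) * L powr (2/3)"
  have L: "1 \<le> L"
    using exp_le T ln_ge_iff[of "real T" 1] by (simp add: L_def)
  have LT: "L \<le> real T" using ln_bound[of "real T"] T by (simp add: L_def)
  note P = rate_powr_identities[of L "real T", folded X_def P_def]
  have X: "0 < X" using L T by (simp add: X_def)
  have KX: "X / 2 \<le> real K" "real K \<le> X + 2"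
    using max_2_nat_round_bounds[OF X] K by (simp_all add: X_def L_def)
  have "real T * (100 / (real K)\<^sup>2) \<le> real T * (100 / (X / 2)\<^sup>2)"
    using KX X by (intro mult_left_mono divide_left_mono power_mono) auto
  also have "\<dots> = 400 * (real T / X\<^sup>2)" by (simp add: power_divide)
  also have "\<dots> = 400 * P" using P L LT by simp
  finally have rounding: "real T * (100 / (real K)\<^sup>2) \<le> 400 * P" .
  have "ln (16 * real T) = 4 * ln 2 + L"
    using T ln_realpow[of 2 4] by (simp add: ln_mult L_def)
  then have "1 + ln (16 * real T) \<le> 6 * L" using ln_2_less_1 L by linarith
  then have "real (Suc K) * (1 + ln (16 * real T)) \<le> (X + 3) * (6 * L)"
    using KX L T by (intro mult_mono) auto
  also have "\<dots> = 6 * (X * L) + 18 * L" by (simp add: algebra_simps)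
  also have "\<dots> \<le> 24 * P" using P L LT by simp
  finally have "real (Suc K) * (1 + ln (16 * real T)) \<le> 24 * P" .
  with rounding have "real T * (100 / (real K)\<^sup>2) + real (Suc K) * (1 + ln (16 * real T)) \<le> 424 * P"
    by simp
  also have "\<dots> \<le> 500 * P" using L T by (simp add: P_def)
  finally show ?thesis by (simp add: P_def L_def mult.assoc)
qed

theorem theorem2:
  shows "\<exists>C::real. \<forall>(T::nat) (K::nat) (y::nat \<Rightarrow> real) (\<pi>::nat \<Rightarrow> nat \<Rightarrow> real).
           3 \<le> T \<longrightarrow>
           (K = max 2 (nat \<lfloor>(real T / ln (real T)) powr (1/3)\<rfloor>) \<or>
            K = max 2 (nat \<lceil>(real T / ln (real T)) powr (1/3)\<rceil>)) \<longrightarrow>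
           (\<forall>t\<in>{1..T}. y t \<in> {0, 1}) \<longrightarrow>
           bm_log_run K T y \<pi> \<longrightarrow>
           PKLCal K T y \<pi> \<le> C * real T powr (1/3) * ln (real T) powr (2/3)"
proof (intro exI[of _ 500] allI impI)
  fix T K :: nat and y :: "nat \<Rightarrow> real" and \<pi> :: "nat \<Rightarrow> nat \<Rightarrow> real"
  assume T: "3 \<le> T"
    and K: "K = max 2 (nat \<lfloor>(real T / ln (real T)) powr (1/3)\<rfloor>) \<or>
            K = max 2 (nat \<lceil>(real T / ln (real T)) powr (1/3)\<rceil>)"
    and y: "\<forall>t\<in>{1..T}. y t \<in> {0, 1}"
    and run: "bm_log_run K T y \<pi>"
  have "2 \<le> K" "1 \<le> T" using K T by auto
  then have "PKLCal K T y \<pi> \<le> real T * (100 / (real K)\<^sup>2) + real (Suc K) * (1 + ln (16 * real T))"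
    using run y by (rule PKLCal_le)
  also have "\<dots> \<le> 500 * real T powr (1/3) * ln (real T) powr (2/3)"
    using T K by (rule rate_bound)
  finally show "PKLCal K T y \<pi> \<le> 500 * real T powr (1/3) * ln (real T) powr (2/3)" .
qed

end
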